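(* Let $A$ generate a strongly continuous semigroup on a Banach space $X$ and let $\alpha\in\mathbb{R}$. Assume that for every $x\in\operatorname{Dom}(A)$ there is a constant $c_x$ with $\|e^{At}x\|_{\operatorname{Dom}(A)}\le c_xe^{\alpha t}$ for all $t\ge0$. Then there is a constant $c$ with $\|e^{At}\|_{X\to X}\le ce^{\alpha t}$ for all $t\ge0$.
   Context: $\|\cdot\|_{\operatorname{Dom}(A)}$ denotes the graph norm of $A$. *)

theory Defs
  imports "HOL-Analysis.Analysis"
begin

definition C0_semigroup :: "(real \<Rightarrow> ('a::banach \<Rightarrow>\<^sub>L 'a)) \<Rightarrow> bool" where
  "C0_semigroup T \<longleftrightarrow>
     T 0 = id_blinfun \<and>
     (\<forall>s t. 0 \<le> s \<longrightarrow> 0 \<le> t \<longrightarrow> T (s + t) = T s o\<^sub>L T t) \<and>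
     (\<forall>x. ((\<lambda>t. blinfun_apply (T t) x) \<longlongrightarrow> x) (at_right 0))"

definition generator :: "(real \<Rightarrow> ('a::banach \<Rightarrow>\<^sub>L 'a)) \<Rightarrow> 'a set \<Rightarrow> ('a \<Rightarrow> 'a) \<Rightarrow> bool" where
  "generator T D A \<longleftrightarrow>
     D = {x. \<exists>y. ((\<lambda>h. (1 / h) *\<^sub>R (blinfun_apply (T h) x - x)) \<longlongrightarrow> y) (at_right 0)} \<and>
     (\<forall>x\<in>D. ((\<lambda>h. (1 / h) *\<^sub>R (blinfun_apply (T h) x - x)) \<longlongrightarrow> A x) (at_right 0))"

definition graph_norm :: "('a::real_normed_vector \<Rightarrow> 'a) \<Rightarrow> 'a \<Rightarrow> real" where
  "graph_norm A x = norm x + norm (A x)"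

end

theory Submission
  imports Defs
begin

text \<open>
  Put l = \<alpha> - 1 and let R x be the integral of exp (-l s) T s x over s \<in> [0, 1]. Then R maps
  into the domain of A, and A R = l R - I + exp (-l) T 1. As T t commutes with A, the hypothesis
  applied to R x bounds T t (A R - l R) x by a multiple of exp (\<alpha> t), hence by Banach-Steinhaus
  also the operator norm of T t (A R - l R). Writing T 1 = exp (\<alpha> - 1) (I + A R - l R) gives
  \<parallel>T (t + 1)\<parallel> \<le> exp (\<alpha> - 1) (C exp (\<alpha> t) + \<parallel>T t\<parallel>), and since 2 / e < 1 this recursion
  propagates a bound \<parallel>T t\<parallel> \<le> c exp (\<alpha> t) from [0, 1], where T is bounded (Banach-Steinhaus
  once more), to all t \<ge> 0.
\<close>

lemma norm_blinfun_le_of_bounded_on_ball: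
  fixes f :: "'a::real_normed_vector \<Rightarrow>\<^sub>L 'b::real_normed_vector"
  assumes "r > 0" and bounded: "\<And>x. x \<in> ball x0 r \<Longrightarrow> norm (f x) \<le> c"
  shows "norm f \<le> 4 * c / r"
proof (rule norm_blinfun_bound)
  have "norm (f x0) \<le> c" using bounded \<open>r > 0\<close> by simp
  then show "0 \<le> 4 * c / r" using \<open>r > 0\<close> by (simp add: order_trans[OF norm_ge_zero])
  fix y :: 'a
  show "norm (f y) \<le> 4 * c / r * norm y"
  proof (cases "y = 0")
    case False
    define z where "z = (r / 2 / norm y) *\<^sub>R y"
    have "norm z < r" using False \<open>r > 0\<close> by (simp add: z_def)
    then have "norm (f (x0 + z)) \<le> c" "norm (f x0) \<le> c"
      using bounded \<open>r > 0\<close> by (auto simp: dist_norm)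
    moreover have "f z = f (x0 + z) - f x0" by (simp add: blinfun.add_right)
    ultimately have fz: "norm (f z) \<le> 2 * c"
      using norm_triangle_ineq4[of "f (x0 + z)" "f x0"] by simp
    have "y = (2 * norm y / r) *\<^sub>R z" using False \<open>r > 0\<close> by (simp add: z_def)
    then have "f y = (2 * norm y / r) *\<^sub>R f z" by (metis blinfun.scaleR_right)
    then have "norm (f y) = (2 * norm y / r) * norm (f z)" using \<open>r > 0\<close> by simp
    also have "\<dots> \<le> (2 * norm y / r) * (2 * c)" using fz \<open>r > 0\<close> by (intro mult_left_mono) auto
    finally show ?thesis by (simp add: mult_ac)
  qed simp
qed

theorem banach_steinhaus:
  fixes F :: "'i \<Rightarrow> ('a::banach \<Rightarrow>\<^sub>L 'b::real_normed_vector)"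
  assumes pointwise_bounded: "\<And>x. \<exists>c. \<forall>i\<in>I. norm (F i x) \<le> c"
  shows "\<exists>C. \<forall>i\<in>I. norm (F i) \<le> C"
proof -
  define E where "E n = (\<Inter>i\<in>I. {x. norm (F i x) \<le> real n})" for n :: nat
  have "closed (E n)" for n
    unfolding E_def by (intro closed_INT ballI closed_Collect_le continuous_intros)
  moreover have "\<Union>(range E) = UNIV"
  proof -
    have "\<exists>n. x \<in> E n" for x
    proof -
      obtain c where "\<forall>i\<in>I. norm (F i x) \<le> c" using pointwise_bounded by blast
      moreover obtain n :: nat where "c \<le> real n" using real_arch_simple by blast
      ultimately show ?thesis by (auto simp: E_def intro: order_trans)
    qed
    then show ?thesis by blast
  qed
  ultimately have "\<exists>n. interior (E n) \<noteq> {}"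
    using Baire_category_alt[of euclidean "range E"]
    by (auto simp: completely_metrizable_space_euclidean)
  then obtain n x0 where "x0 \<in> interior (E n)" by blast
  then obtain r where "r > 0" "ball x0 r \<subseteq> E n"
    using open_contains_ball_eq open_interior interior_subset by (meson order_trans)
  then have "norm (F i) \<le> 4 * real n / r" if "i \<in> I" for i
    using that by (intro norm_blinfun_le_of_bounded_on_ball) (auto simp: E_def)
  then show ?thesis by blast
qed

lemma banach_steinhaus_exp:
  fixes F :: "real \<Rightarrow> ('a::banach \<Rightarrow>\<^sub>L 'b::real_normed_vector)"
  assumes "\<And>x. \<exists>c. \<forall>t\<ge>0. norm (F t x) \<le> c * exp (\<alpha> * t)"
  shows "\<exists>C. \<forall>t\<ge>0. norm (F t) \<le> C * exp (\<alpha> * t)"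
proof -
  have "\<exists>c. \<forall>t\<in>{0..}. norm ((exp (- \<alpha> * t) *\<^sub>R F t) x) \<le> c" for x
  proof -
    obtain c where c: "\<And>t. t \<ge> 0 \<Longrightarrow> norm (F t x) \<le> c * exp (\<alpha> * t)"
      using assms by blast
    have "norm ((exp (- \<alpha> * t) *\<^sub>R F t) x) \<le> c" if "t \<ge> 0" for t
    proof -
      have "norm ((exp (- \<alpha> * t) *\<^sub>R F t) x) = exp (- \<alpha> * t) * norm (F t x)"
        by (simp add: blinfun.scaleR_left)
      also have "\<dots> \<le> exp (- \<alpha> * t) * (c * exp (\<alpha> * t))"
        using c[OF that] by (intro mult_left_mono) auto
      also have "\<dots> = c" by (simp add: exp_minus field_simps)
      finally show ?thesis .
    qed
    then show ?thesis by auto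
  qed
  then obtain C where C: "\<And>t. t \<ge> 0 \<Longrightarrow> exp (- \<alpha> * t) * norm (F t) \<le> C"
    using banach_steinhaus[of "{0..}" "\<lambda>t. exp (- \<alpha> * t) *\<^sub>R F t"] by auto
  have "norm (F t) \<le> C * exp (\<alpha> * t)" if "t \<ge> 0" for t
    using C[OF that] by (simp add: exp_minus field_simps)
  then show ?thesis by blast
qed

lemma has_vector_derivative_imp_difference_quotient_tendsto:
  fixes f :: "real \<Rightarrow> 'b::real_normed_vector"
  assumes "(f has_vector_derivative f') (at_right 0)"
  shows "((\<lambda>h. (1 / h) *\<^sub>R (f h - f 0)) \<longlongrightarrow> f') (at_right 0)"
proof -
  have "((\<lambda>h. (1 / norm (h - 0)) *\<^sub>R (f h - (f 0 + (h - 0) *\<^sub>R f'))) \<longlongrightarrow> 0) (at_right 0)"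
    using assms unfolding has_vector_derivative_def has_derivative_within by blast
  moreover have "\<forall>\<^sub>F h in at_right 0.
      (1 / norm (h - 0)) *\<^sub>R (f h - (f 0 + (h - 0) *\<^sub>R f')) = (1 / h) *\<^sub>R (f h - f 0) - f'"
    using eventually_at_right_less[of "0::real"]
    by eventually_elim (auto simp: scaleR_diff_right scaleR_add_right)
  ultimately have "((\<lambda>h. (1 / h) *\<^sub>R (f h - f 0) - f') \<longlongrightarrow> 0) (at_right 0)"
    using tendsto_cong by fastforce
  then show ?thesis by (simp add: LIM_zero_iff)
qed

lemma exp_bound_of_unit_step:
  fixes f :: "real \<Rightarrow> real"
  assumes initial: "\<And>t. 0 \<le> t \<Longrightarrow> t \<le> 1 \<Longrightarrow> f t \<le> M"
    and step: "\<And>t. 0 \<le> t \<Longrightarrow> f (t + 1) \<le> exp (\<alpha> - 1) * (K * exp (\<alpha> * t) + f t)"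
  shows "\<exists>c. \<forall>t\<ge>0. f t \<le> c * exp (\<alpha> * t)"
proof -
  define m where "m = max 0 (max K M)"
  define c where "c = m * exp \<bar>\<alpha>\<bar>"
  have "0 \<le> m" by (simp add: m_def)
  then have "m \<le> c" unfolding c_def by (simp add: mult_le_cancel_left1)
  then have "0 \<le> c" "K \<le> c" by (auto simp: m_def)
  have "f (s + real n) \<le> c * exp (\<alpha> * (s + real n))" if s: "0 \<le> s" "s \<le> 1" for s n
  proof (induction n)
    case 0
    have "0 \<le> \<bar>\<alpha>\<bar> + \<alpha> * s"
      using s by (cases "\<alpha> \<ge> 0") (auto intro: order_trans[of _ "\<alpha>"] mult_left_mono_neg[of s 1 \<alpha>, simplified])
    then have "m \<le> m * exp (\<bar>\<alpha>\<bar> + \<alpha> * s)"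
      using \<open>0 \<le> m\<close> by (simp add: mult_le_cancel_left1)
    then show ?case
      using initial[OF s] by (simp add: c_def m_def exp_add)
  next
    case (Suc n)
    define u where "u = s + real n"
    have "f (u + 1) \<le> exp (\<alpha> - 1) * (K * exp (\<alpha> * u) + f u)"
      using s by (intro step) (simp add: u_def)
    also have "\<dots> \<le> exp (\<alpha> - 1) * (c * exp (\<alpha> * u) + c * exp (\<alpha> * u))"
      using Suc.IH \<open>K \<le> c\<close> by (intro mult_left_mono add_mono mult_right_mono) (auto simp: u_def)
    also have "\<dots> = 2 / exp 1 * (c * exp (\<alpha> * (u + 1)))"
      by (simp add: exp_diff exp_add distrib_left)
    also have "\<dots> \<le> c * exp (\<alpha> * (u + 1))"
      using exp_ge_add_one_self[of 1] \<open>0 \<le> c\<close> by (intro mult_left_le_one_le) auto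
    finally show ?case by (simp add: u_def add.commute add.left_commute)
  qed
  moreover have "t = (t - real (nat \<lfloor>t\<rfloor>)) + real (nat \<lfloor>t\<rfloor>)"
    "0 \<le> t - real (nat \<lfloor>t\<rfloor>)" "t - real (nat \<lfloor>t\<rfloor>) \<le> 1" if "0 \<le> t" for t
    using that by linarith+
  ultimately show ?thesis by metis
qed

lemma generator_tendstoD:
  assumes "generator T D A" and "((\<lambda>h. (1 / h) *\<^sub>R (T h x - x)) \<longlongrightarrow> y) (at_right 0)"
  shows "x \<in> D" "A x = y"
proof -
  show "x \<in> D" using assms by (auto simp: generator_def)
  then have "((\<lambda>h. (1 / h) *\<^sub>R (T h x - x)) \<longlongrightarrow> A x) (at_right 0)"
    using assms(1) by (auto simp: generator_def)
  then show "A x = y" using assms(2) by (rule tendsto_unique[OF trivial_limit_at_right_real])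
qed

locale strongly_continuous_semigroup =
  fixes T :: "real \<Rightarrow> ('a::banach \<Rightarrow>\<^sub>L 'a)"
  assumes C0: "C0_semigroup T"
begin

lemma semigroup_0: "T 0 = id_blinfun"
  using C0 by (simp add: C0_semigroup_def)

lemma semigroup_add: "0 \<le> s \<Longrightarrow> 0 \<le> t \<Longrightarrow> T (s + t) = T s o\<^sub>L T t"
  using C0 by (simp add: C0_semigroup_def)

lemma semigroup_add_apply: "0 \<le> s \<Longrightarrow> 0 \<le> t \<Longrightarrow> T (s + t) x = T s (T t x)"
  by (simp add: semigroup_add)

lemma semigroup_commute: "0 \<le> s \<Longrightarrow> 0 \<le> t \<Longrightarrow> T s (T t x) = T t (T s x)"
  by (metis semigroup_add_apply add.commute)

lemma orbit_tendsto_at_right_0: "((\<lambda>t. T t x) \<longlongrightarrow> x) (at_right 0)"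
  using C0 by (simp add: C0_semigroup_def)

lemma bounded_near_0: "\<exists>d>0. \<exists>M. \<forall>t\<in>{0..d}. norm (T t) \<le> M"
proof (rule ccontr)
  assume "\<not> ?thesis"
  then have "\<exists>t. t \<in> {0..inverse (real (Suc n))} \<and> real n < norm (T t)" for n
    by (metis inverse_positive_iff_positive of_nat_0_less_iff zero_less_Suc not_le)
  then obtain s where s: "\<And>n. s n \<in> {0..inverse (real (Suc n))}" "\<And>n. real n < norm (T (s n))"
    by metis
  have "s \<longlonglongrightarrow> 0"
    by (rule tendsto_sandwich[OF _ _ tendsto_const LIMSEQ_inverse_real_of_nat]) (use s in auto)
  have "\<exists>c. \<forall>n\<in>UNIV. norm (T (s n) x) \<le> c" for x
  proof -
    have "continuous (at 0 within {0..}) (\<lambda>t. T t x)"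
      using orbit_tendsto_at_right_0 by (simp add: continuous_within at_within_Ici_at_right semigroup_0)
    then have "((\<lambda>t. T t x) \<circ> s) \<longlonglongrightarrow> T 0 x"
      using \<open>s \<longlonglongrightarrow> 0\<close> s(1) unfolding continuous_within_sequentially by auto
    then have "bounded (range ((\<lambda>t. T t x) \<circ> s))"
      by (rule convergent_imp_bounded)
    then show ?thesis by (auto simp: bounded_iff)
  qed
  then obtain C where "\<And>n. norm (T (s n)) \<le> C"
    using banach_steinhaus[of UNIV "\<lambda>n. T (s n)"] by auto
  moreover obtain n where "C \<le> real n" using real_arch_simple by blast
  ultimately show False using s(2)[of n] by (meson not_le order_trans)
qed

lemma bounded_on_interval: "\<exists>M\<ge>1. \<forall>t\<in>{0..b}. norm (T t) \<le> M"
proof -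
  obtain d M0 where "d > 0" and M0: "\<And>t. t \<in> {0..d} \<Longrightarrow> norm (T t) \<le> M0"
    using bounded_near_0 by blast
  define M where "M = max 1 M0"
  have "M \<ge> 1" and M: "\<And>t. t \<in> {0..d} \<Longrightarrow> norm (T t) \<le> M"
    using M0 by (force simp: M_def)+
  have "\<forall>t\<in>{0..real n * d}. norm (T t) \<le> M ^ Suc n" for n
  proof (induction n)
    case 0
    then show ?case using M[of 0] \<open>d > 0\<close> by simp
  next
    case (Suc n)
    show ?case
    proof
      fix t assume t: "t \<in> {0..real (Suc n) * d}"
      show "norm (T t) \<le> M ^ Suc (Suc n)"
      proof (cases "t \<le> d")
        case True
        then have "norm (T t) \<le> M" using M t by simp
        also have "M \<le> M ^ Suc (Suc n)"
          using power_increasing[of 1 "Suc (Suc n)" M] \<open>M \<ge> 1\<close> by simp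
        finally show ?thesis .
      next
        case False
        then have "norm (T t) \<le> norm (T d) * norm (T (t - d))"
          using semigroup_add[of d "t - d"] \<open>d > 0\<close> by (simp add: norm_blinfun_compose)
        also have "\<dots> \<le> M * M ^ Suc n"
          using Suc.IH M[of d] \<open>d > 0\<close> False t \<open>M \<ge> 1\<close>
          by (intro mult_mono) (auto simp: algebra_simps)
        finally show ?thesis by simp
      qed
    qed
  qed
  moreover obtain n :: nat where "b / d \<le> real n" using real_arch_simple by blast
  then have "b \<le> real n * d" using \<open>d > 0\<close> by (simp add: field_simps)
  ultimately have "\<forall>t\<in>{0..b}. norm (T t) \<le> M ^ Suc n" by auto
  moreover have "M ^ Suc n \<ge> 1" using \<open>M \<ge> 1\<close> one_le_power by blast
  ultimately show ?thesis by blast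
qed

lemma orbit_increment:
  assumes "0 \<le> u" "u \<le> v"
  shows "norm (T v x - T u x) \<le> norm (T u) * norm (T (v - u) x - x)"
proof -
  have "T v x - T u x = T u (T (v - u) x - x)"
    using semigroup_add_apply[of u "v - u" x] assms by (simp add: blinfun.diff_right)
  then show ?thesis by (metis norm_blinfun)
qed

lemma continuous_on_orbit: "continuous_on {0..} (\<lambda>t. T t x)"
  unfolding continuous_on_iff
proof (intro ballI allI impI)
  fix t e :: real assume "t \<in> {0..}" and "0 < e"
  obtain M where "M \<ge> 1" and M: "\<And>s. s \<in> {0..t + 1} \<Longrightarrow> norm (T s) \<le> M"
    using bounded_on_interval[of "t + 1"] by blast
  have "\<forall>\<^sub>F h in at_right 0. dist (T h x) x < e / M"
    using orbit_tendsto_at_right_0 \<open>0 < e\<close> \<open>M \<ge> 1\<close> by (simp add: tendsto_iff)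
  then obtain d where "d > 0" and d: "\<And>h. 0 < h \<Longrightarrow> h < d \<Longrightarrow> norm (T h x - x) < e / M"
    by (auto simp: eventually_at_right[OF zero_less_one] dist_norm)
  have increment_small: "norm (T v x - T u x) < e"
    if "0 \<le> u" "u \<le> v" "\<bar>v - u\<bar> < min d 1" "u \<le> t" for u v
  proof (cases "u = v")
    case False
    have "norm (T v x - T u x) \<le> norm (T u) * norm (T (v - u) x - x)"
      using that by (intro orbit_increment) auto
    also have "\<dots> \<le> M * norm (T (v - u) x - x)"
      using M[of u] that by (intro mult_right_mono) auto
    also have "\<dots> < M * (e / M)"
      using d[of "v - u"] that False \<open>M \<ge> 1\<close> by (intro mult_strict_left_mono) auto
    finally show ?thesis using \<open>M \<ge> 1\<close> by simp
  qed (use \<open>0 < e\<close> in simp)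
  have "dist (T s x) (T t x) < e" if "s \<in> {0..}" "dist s t < min d 1" for s
  proof (cases "s \<le> t")
    case True
    then show ?thesis
      using increment_small[of s t] that by (simp add: dist_norm dist_real_def norm_minus_commute[of "T s x"])
  next
    case False
    then show ?thesis
      using increment_small[of t s] that \<open>t \<in> {0..}\<close> by (simp add: dist_norm dist_real_def)
  qed
  then show "\<exists>d>0. \<forall>s\<in>{0..}. dist s t < d \<longrightarrow> dist (T s x) (T t x) < e"
    using \<open>d > 0\<close> by (intro exI[of _ "min d 1"]) auto
qed

lemma generator_invariant:
  assumes gen: "generator T D A" and "y \<in> D" "0 \<le> t"
  shows "T t y \<in> D" "A (T t y) = T t (A y)"
proof -
  have "((\<lambda>h. (1 / h) *\<^sub>R (T h y - y)) \<longlongrightarrow> A y) (at_right 0)"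
    using gen \<open>y \<in> D\<close> by (auto simp: generator_def)
  then have "((\<lambda>h. T t ((1 / h) *\<^sub>R (T h y - y))) \<longlongrightarrow> T t (A y)) (at_right 0)"
    by (rule bounded_linear.tendsto[OF blinfun.bounded_linear_right])
  moreover have "\<forall>\<^sub>F h in at_right 0. T t ((1 / h) *\<^sub>R (T h y - y)) = (1 / h) *\<^sub>R (T h (T t y) - T t y)"
    using eventually_at_right_less[of "0::real"]
    by eventually_elim (use \<open>0 \<le> t\<close> in \<open>simp add: blinfun.scaleR_right blinfun.diff_right semigroup_commute\<close>)
  ultimately have "((\<lambda>h. (1 / h) *\<^sub>R (T h (T t y) - T t y)) \<longlongrightarrow> T t (A y)) (at_right 0)"
    using tendsto_cong by fastforce
  then show "T t y \<in> D" "A (T t y) = T t (A y)"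
    using generator_tendstoD[OF gen] by auto
qed

definition damped_orbit :: "real \<Rightarrow> 'a \<Rightarrow> real \<Rightarrow> 'a" where
  "damped_orbit l x s = exp (- l * s) *\<^sub>R T s x"

lemma continuous_on_damped_orbit: "continuous_on {0..b} (damped_orbit l x)"
  unfolding damped_orbit_def
  by (intro continuous_intros continuous_on_subset[OF continuous_on_orbit]) auto

lemma integrable_damped_orbit: "damped_orbit l x integrable_on {0..b}"
  by (rule integrable_continuous_interval[OF continuous_on_damped_orbit])

lemma bounded_linear_integral_damped_orbit: "bounded_linear (\<lambda>x. integral {0..1} (damped_orbit l x))"
proof -
  obtain M where M: "\<And>t. t \<in> {0..1} \<Longrightarrow> norm (T t) \<le> M" using bounded_on_interval[of 1] by blast
  have bound: "norm (damped_orbit l x s) \<le> exp \<bar>l\<bar> * (M * norm x)" if s: "s \<in> {0..1}" for x s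
  proof -
    have "- l * s \<le> \<bar>l\<bar> * s" using s by (intro mult_right_mono) auto
    also have "\<dots> \<le> \<bar>l\<bar>" using s by (simp add: mult_left_le)
    moreover have "norm (T s x) \<le> M * norm x"
      using norm_blinfun[of "T s" x] M[OF s] by (meson mult_right_mono norm_ge_zero order_trans)
    ultimately show ?thesis
      by (simp add: damped_orbit_def) (intro mult_mono; simp)
  qed
  show ?thesis
  proof (rule bounded_linear_intro[where K = "exp \<bar>l\<bar> * M"])
    fix x y
    have "damped_orbit l (x + y) = (\<lambda>s. damped_orbit l x s + damped_orbit l y s)"
      by (simp add: fun_eq_iff damped_orbit_def blinfun.add_right scaleR_add_right)
    then show "integral {0..1} (damped_orbit l (x + y))
        = integral {0..1} (damped_orbit l x) + integral {0..1} (damped_orbit l y)"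
      by (simp add: integral_add[OF integrable_damped_orbit integrable_damped_orbit])
  next
    fix r x
    have "damped_orbit l (r *\<^sub>R x) = (\<lambda>s. r *\<^sub>R damped_orbit l x s)"
      by (simp add: fun_eq_iff damped_orbit_def blinfun.scaleR_right)
    then show "integral {0..1} (damped_orbit l (r *\<^sub>R x)) = r *\<^sub>R integral {0..1} (damped_orbit l x)"
      by simp
  next
    fix x
    have "norm (integral {0..1} (damped_orbit l x)) \<le> exp \<bar>l\<bar> * (M * norm x) * (1 - 0)"
      using bound by (intro integral_bound continuous_on_damped_orbit) auto
    then show "norm (integral {0..1} (damped_orbit l x)) \<le> norm x * (exp \<bar>l\<bar> * M)"
      by (simp add: algebra_simps)
  qed
qed

definition truncated_laplace :: "real \<Rightarrow> 'a \<Rightarrow>\<^sub>L 'a" where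
  "truncated_laplace l = Blinfun (\<lambda>x. integral {0..1} (damped_orbit l x))"

lemma truncated_laplace_apply: "truncated_laplace l x = integral {0..1} (damped_orbit l x)"
  by (simp add: truncated_laplace_def bounded_linear_Blinfun_apply[OF bounded_linear_integral_damped_orbit])

lemma semigroup_truncated_laplace:
  assumes "0 \<le> h"
  shows "T h (truncated_laplace l x)
    = exp (l * h) *\<^sub>R (integral {0..1 + h} (damped_orbit l x) - integral {0..h} (damped_orbit l x))"
proof -
  have "T h (truncated_laplace l x) = integral {0..1} (\<lambda>s. T h (damped_orbit l x s))"
    unfolding truncated_laplace_apply
    by (rule integral_linear[OF integrable_damped_orbit blinfun.bounded_linear_right, symmetric, unfolded o_def])
  also have "\<dots> = integral {0..1} (\<lambda>s. exp (l * h) *\<^sub>R damped_orbit l x (s + h))"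
  proof (rule integral_cong)
    fix s :: real assume "s \<in> {0..1}"
    have "exp (- l * s) = exp (l * h) * exp (- l * (s + h))"
      by (simp add: exp_add[symmetric] algebra_simps)
    then show "T h (damped_orbit l x s) = exp (l * h) *\<^sub>R damped_orbit l x (s + h)"
      using \<open>s \<in> {0..1}\<close> assms
      by (simp add: damped_orbit_def blinfun.scaleR_right semigroup_add_apply add.commute)
  qed
  also have "\<dots> = exp (l * h) *\<^sub>R integral {h..1 + h} (damped_orbit l x)"
    using integral_shift_Icc_real[of 0 1 "damped_orbit l x" h] by (simp add: o_def add.commute)
  also have "integral {h..1 + h} (damped_orbit l x)
      = integral {0..1 + h} (damped_orbit l x) - integral {0..h} (damped_orbit l x)"
    using Henstock_Kurzweil_Integration.integral_combine[of 0 h "1 + h" "damped_orbit l x"]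
      assms integrable_damped_orbit by (simp add: algebra_simps)
  finally show ?thesis .
qed

lemma truncated_laplace_generator:
  assumes gen: "generator T D A"
  shows "truncated_laplace l x \<in> D"
    and "A (truncated_laplace l x) = l *\<^sub>R truncated_laplace l x - x + exp (- l) *\<^sub>R T 1 x"
proof -
  define F where "F = (\<lambda>u. integral {0..u} (damped_orbit l x))"
  define \<Phi> where "\<Phi> h = exp (l * h) *\<^sub>R (F (1 + h) - F h)" for h
  have F': "(F has_vector_derivative damped_orbit l x u) (at u within {0..2})" if "u \<in> {0..2}" for u
    unfolding F_def by (rule integral_has_vector_derivative[OF continuous_on_damped_orbit that])
  have "((\<lambda>h. 1 + h) has_vector_derivative 1) (at 0 within {0..1::real})"
    by (auto intro!: derivative_eq_intros)
  moreover have "(F has_vector_derivative damped_orbit l x 1) (at 1 within (\<lambda>h. 1 + h) ` {0..1})"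
    by (rule has_vector_derivative_within_subset[OF F']) auto
  ultimately have F1: "((\<lambda>h. F (1 + h)) has_vector_derivative damped_orbit l x 1) (at 0 within {0..1})"
    using vector_diff_chain_within[of "\<lambda>h. 1 + h" 1 0 "{0..1}" F] by (simp add: o_def)
  have F0: "(F has_vector_derivative damped_orbit l x 0) (at 0 within {0..1})"
    by (rule has_vector_derivative_within_subset[OF F']) auto
  have "(\<Phi> has_vector_derivative
      exp (l * 0) *\<^sub>R (damped_orbit l x 1 - damped_orbit l x 0) + l *\<^sub>R (F (1 + 0) - F 0))
      (at 0 within {0..1})"
    unfolding \<Phi>_def by (intro has_vector_derivative_scaleR has_vector_derivative_diff F1 F0)
      (auto intro!: derivative_eq_intros)
  moreover have "F 1 = truncated_laplace l x" "F 0 = 0"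
    by (simp_all add: F_def truncated_laplace_apply)
  ultimately have "(\<Phi> has_vector_derivative l *\<^sub>R truncated_laplace l x - x + exp (- l) *\<^sub>R T 1 x)
      (at_right 0)"
    by (simp add: at_within_Icc_at_right damped_orbit_def semigroup_0 algebra_simps)
  then have lim: "((\<lambda>h. (1 / h) *\<^sub>R (\<Phi> h - \<Phi> 0))
      \<longlongrightarrow> l *\<^sub>R truncated_laplace l x - x + exp (- l) *\<^sub>R T 1 x) (at_right 0)"
    by (rule has_vector_derivative_imp_difference_quotient_tendsto)
  have \<Phi>_semigroup: "\<Phi> h = T h (truncated_laplace l x)" if "0 \<le> h" for h
    using semigroup_truncated_laplace[OF that] by (simp add: \<Phi>_def F_def)
  have "\<forall>\<^sub>F h in at_right 0. (1 / h) *\<^sub>R (\<Phi> h - \<Phi> 0)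
      = (1 / h) *\<^sub>R (T h (truncated_laplace l x) - truncated_laplace l x)"
    using eventually_at_right_less[of "0::real"]
    by eventually_elim (simp add: \<Phi>_semigroup semigroup_0)
  from tendsto_cong[OF this, THEN iffD1, OF lim]
  show "truncated_laplace l x \<in> D"
    and "A (truncated_laplace l x) = l *\<^sub>R truncated_laplace l x - x + exp (- l) *\<^sub>R T 1 x"
    using generator_tendstoD[OF gen] by auto
qed

lemma exp_bound_of_graph_norm_bound:
  fixes B B' :: "'a \<Rightarrow>\<^sub>L 'a"
  assumes gen: "generator T D A"
    and graph_bound: "\<forall>x\<in>D. \<exists>c. \<forall>t\<ge>0. graph_norm A (T t x) \<le> c * exp (\<alpha> * t)"
    and "\<And>x. B x \<in> D" "\<And>x. A (B x) = B' x"
  shows "\<exists>C. \<forall>t\<ge>0. norm (T t o\<^sub>L (B' - l *\<^sub>R B)) \<le> C * exp (\<alpha> * t)"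
proof (rule banach_steinhaus_exp)
  fix x
  obtain c where c: "\<And>t. t \<ge> 0 \<Longrightarrow> graph_norm A (T t (B x)) \<le> c * exp (\<alpha> * t)"
    using graph_bound assms(3) by blast
  have "norm ((T t o\<^sub>L (B' - l *\<^sub>R B)) x) \<le> (1 + \<bar>l\<bar>) * c * exp (\<alpha> * t)" if "t \<ge> 0" for t
  proof -
    have "norm ((T t o\<^sub>L (B' - l *\<^sub>R B)) x) \<le> norm (T t (B' x)) + \<bar>l\<bar> * norm (T t (B x))"
      using norm_triangle_ineq4[of "T t (B' x)" "l *\<^sub>R T t (B x)"] by (simp add: blinfun.bilinear_simps)
    also have "\<dots> \<le> (1 + \<bar>l\<bar>) * graph_norm A (T t (B x))"
      using generator_invariant(2)[OF gen assms(3) that] assms(4)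
        mult_nonneg_nonneg[of "\<bar>l\<bar>" "norm (T t (B' x))"] norm_ge_zero[of "T t (B x)"]
      by (simp add: graph_norm_def algebra_simps)
    also have "\<dots> \<le> (1 + \<bar>l\<bar>) * (c * exp (\<alpha> * t))"
      using c[OF that] by (intro mult_left_mono) auto
    finally show ?thesis by (simp add: mult.assoc)
  qed
  then show "\<exists>c. \<forall>t\<ge>0. norm ((T t o\<^sub>L (B' - l *\<^sub>R B)) x) \<le> c * exp (\<alpha> * t)"
    by blast
qed

lemma exp_bound_of_unit_decomposition:
  assumes decomposition: "T 1 = exp (\<alpha> - 1) *\<^sub>R (id_blinfun + B)"
    and B_bound: "\<And>t. t \<ge> 0 \<Longrightarrow> norm (T t o\<^sub>L B) \<le> C * exp (\<alpha> * t)"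
  shows "\<exists>c. \<forall>t\<ge>0. norm (T t) \<le> c * exp (\<alpha> * t)"
proof -
  obtain M where M: "\<And>t. t \<in> {0..1} \<Longrightarrow> norm (T t) \<le> M" using bounded_on_interval[of 1] by blast
  have "norm (T (t + 1)) \<le> exp (\<alpha> - 1) * (C * exp (\<alpha> * t) + norm (T t))" if "0 \<le> t" for t
  proof -
    have "T (t + 1) = exp (\<alpha> - 1) *\<^sub>R (T t + (T t o\<^sub>L B))"
      using semigroup_add[of t 1] \<open>0 \<le> t\<close> decomposition
      by (intro blinfun_eqI) (simp add: blinfun.bilinear_simps)
    then have "norm (T (t + 1)) \<le> exp (\<alpha> - 1) * (norm (T t o\<^sub>L B) + norm (T t))"
      by (simp add: add.commute norm_triangle_ineq mult_left_mono)
    also have "\<dots> \<le> exp (\<alpha> - 1) * (C * exp (\<alpha> * t) + norm (T t))"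
      using B_bound[OF \<open>0 \<le> t\<close>] by (intro mult_left_mono add_right_mono) auto
    finally show ?thesis .
  qed
  then show ?thesis using M by (intro exp_bound_of_unit_step) auto
qed

end

theorem lemma4p11:
  fixes T :: "real \<Rightarrow> ('a::banach \<Rightarrow>\<^sub>L 'a)" and D :: "'a set" and A :: "'a \<Rightarrow> 'a"
    and \<alpha> :: real
  assumes "C0_semigroup T"
    and "generator T D A"
    and "\<forall>x\<in>D. \<exists>c. \<forall>t\<ge>0. graph_norm A (blinfun_apply (T t) x) \<le> c * exp (\<alpha> * t)"
  shows "\<exists>c. \<forall>t\<ge>0. norm (T t) \<le> c * exp (\<alpha> * t)"
proof -
  interpret strongly_continuous_semigroup T by unfold_locales (rule assms(1))
  define l where "l = \<alpha> - 1"
  define R where "R = truncated_laplace l"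
  define W where "W = l *\<^sub>R R - id_blinfun + exp (- l) *\<^sub>R T 1"
  have "R x \<in> D" "A (R x) = W x" for x
    using truncated_laplace_generator[OF assms(2)]
    by (simp_all add: R_def W_def blinfun.bilinear_simps)
  then obtain C where "\<And>t. t \<ge> 0 \<Longrightarrow> norm (T t o\<^sub>L (W - l *\<^sub>R R)) \<le> C * exp (\<alpha> * t)"
    using exp_bound_of_graph_norm_bound[OF assms(2,3)] by blast
  moreover have "T 1 = exp l *\<^sub>R (id_blinfun + (W - l *\<^sub>R R))"
    by (intro blinfun_eqI) (simp add: W_def blinfun.bilinear_simps exp_minus)
  ultimately show ?thesis
    using exp_bound_of_unit_decomposition unfolding l_def by blast
qed

end
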